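(* Let $v_1,\dots,v_M>0$, $\lambda_1,\dots,\lambda_M>0$, $\bar x\in[0,\sum_m\lambda_m]$, $\lambda_B\theta_B>0$, $\theta_I>0$, $\bar\rho_1,\dots,\bar\rho_M\in[0,1]$, and define the affine functions $\phi_m(\bm c)=\sum_{i=1}^M c_iv_i+\lambda_B\theta_Bv_m+\bar\rho_mc_m\theta_Iv_m$ (positive on the feasible set). Consider $$\max_{\bm c,\bm\beta}\ \sum_{m=1}^M\beta_m\ \text{ s.t. }\ c_mv_m-\beta_m\phi_m(\bm c)\ge0\ \forall m,\quad \sum_{i=1}^M c_i=\bar x,\quad 0\le c_m\le\lambda_m\ \forall m. \tag{$*$}$$ If $(\bm c^*,\bm\beta^* )$ satisfies the KKT conditions of $( * )$, then there exists $\bm u^*=(u_1^*,\dots,u_M^* )$ such that $u_m^*=1/\phi_m(\bm c^* )$ and $c_m^*v_m-\beta_m^*\phi_m(\bm c^* )=0$ for all $m$, and $\bm c^*$ is an optimal solution of the linear program $$\max_{\bm c}\ \sum_{m=1}^M u_m^*\big(c_mv_m-\beta_m^*\phi_m(\bm c)\big)\ \text{ s.t. }\ \sum_{i=1}^M c_i=\bar x,\quad 0\le c_m\le\lambda_m\ \forall m.$$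
   Context: Problem $( * )$ is the epigraph reformulation of the sum-of-ratios problem $\max\sum_m c_mv_m/\phi_m(\bm c)$ over the same constraints, arising from the asymptotic ($R\to\infty$) offloading problem, where $v_m=B_m^{2/\alpha}$ with trust biases $B_m$, $\bar\rho_m$ is an upper bound on the active ratio of group $m$, and $\bar x$ is the fixed total caching density. *)

theory Defs
  imports Complex_Main
begin

text \<open>Groups are indexed by 0,...,M-1. Parameter lBtB stands for the product
lambda_B * theta_B, thI for theta_I, rho for the bounds rho-bar_m, v for v_m.\<close>

definition phi :: "nat \<Rightarrow> (nat \<Rightarrow> real) \<Rightarrow> real \<Rightarrow> real \<Rightarrow> (nat \<Rightarrow> real) \<Rightarrow> (nat \<Rightarrow> real) \<Rightarrow> nat \<Rightarrow> real" where
  "phi M v lBtB thI rho c m =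
     (\<Sum>i<M. c i * v i) + lBtB * v m + rho m * c m * thI * v m"

definition cfeasible :: "nat \<Rightarrow> (nat \<Rightarrow> real) \<Rightarrow> real \<Rightarrow> (nat \<Rightarrow> real) \<Rightarrow> bool" where
  "cfeasible M lam xbar c \<longleftrightarrow>
     (\<Sum>i<M. c i) = xbar \<and> (\<forall>m<M. 0 \<le> c m \<and> c m \<le> lam m)"

text \<open>KKT conditions of the problem
  max_{c,beta} sum_m beta_m  s.t.  g_m(c,beta) = c_m v_m - beta_m phi_m(c) >= 0,
  sum_i c_i = xbar, c_m >= 0, lambda_m - c_m >= 0,
with Lagrangian L = sum beta + sum_k mu_k g_k + nu (sum c - xbar) + sum a_j c_j + sum g_j (lambda_j - c_j).
The partial derivatives are written out explicitly:
  d g_k / d beta_m = - [k = m] phi_m(c),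
  d g_k / d c_j   = [k = j] v_k - beta_k (v_j + [k = j] rho_k thI v_k).\<close>
definition KKT :: "nat \<Rightarrow> (nat \<Rightarrow> real) \<Rightarrow> (nat \<Rightarrow> real) \<Rightarrow> real \<Rightarrow> real \<Rightarrow> real \<Rightarrow> (nat \<Rightarrow> real)
                   \<Rightarrow> (nat \<Rightarrow> real) \<Rightarrow> (nat \<Rightarrow> real) \<Rightarrow> bool" where
  "KKT M v lam xbar lBtB thI rho c beta \<longleftrightarrow>
     cfeasible M lam xbar c \<and>
     (\<forall>m<M. c m * v m - beta m * phi M v lBtB thI rho c m \<ge> 0) \<and>
     (\<exists>(mu::nat \<Rightarrow> real) (nu::real) (a::nat \<Rightarrow> real) (g::nat \<Rightarrow> real).
        (\<forall>m<M. mu m \<ge> 0 \<and> a m \<ge> 0 \<and> g m \<ge> 0) \<and>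
        \<comment> \<open>stationarity w.r.t. beta_m\<close>
        (\<forall>m<M. 1 - mu m * phi M v lBtB thI rho c m = 0) \<and>
        \<comment> \<open>stationarity w.r.t. c_j\<close>
        (\<forall>j<M. (\<Sum>k<M. mu k * ((if k = j then v k else 0)
                    - beta k * (v j + (if k = j then rho k * thI * v k else 0))))
               + nu + a j - g j = 0) \<and>
        \<comment> \<open>complementary slackness\<close>
        (\<forall>m<M. mu m * (c m * v m - beta m * phi M v lBtB thI rho c m) = 0) \<and>
        (\<forall>m<M. a m * c m = 0) \<and>
        (\<forall>m<M. g m * (lam m - c m) = 0))"

end

theory Submission
  imports Defs
begin

text \<open>Each slack c_m v_m - beta_m phi_m(c) is affine in c, so the multiplier-weighted sum
of the slacks is an affine function whose gradient is exactly the c-part of the Lagrangian's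
gradient. Stationarity identifies this gradient with g_j - a_j - nu, i.e. with the gradient
coming from the box and budget constraints alone, and complementary slackness then makes
c* a maximiser of that linear function over the feasible polytope. Stationarity in beta
gives mu_m phi_m(c*) = 1, hence mu_m = 1/phi_m(c*) and, mu_m being nonzero, every slack
constraint is tight.\<close>

lemma phi_diff:
  "phi M v lBtB thI rho c' m - phi M v lBtB thI rho c m
     = (\<Sum>j<M. (c' j - c j) * v j) + rho m * (c' m - c m) * thI * v m"
  by (simp add: phi_def sum_subtractf left_diff_distrib algebra_simps)

text \<open>The c_j-derivative of sum_k mu_k (c_k v_k - beta_k phi_k(c)), verbatim as in KKT.\<close>
definition weighted_slack_grad ::
    "nat \<Rightarrow> (nat \<Rightarrow> real) \<Rightarrow> real \<Rightarrow> (nat \<Rightarrow> real) \<Rightarrow> (nat \<Rightarrow> real) \<Rightarrow> (nat \<Rightarrow> real) \<Rightarrow> nat \<Rightarrow> real" where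
  "weighted_slack_grad M v thI rho beta mu j =
     (\<Sum>k<M. mu k * ((if k = j then v k else 0)
                    - beta k * (v j + (if k = j then rho k * thI * v k else 0))))"

lemma sum_weighted_slack_grad:
  "(\<Sum>j<M. d j * weighted_slack_grad M v thI rho beta mu j)
     = (\<Sum>k<M. mu k * (d k * v k - beta k * ((\<Sum>j<M. d j * v j) + rho k * d k * thI * v k)))"
proof -
  have "(\<Sum>j<M. d j * weighted_slack_grad M v thI rho beta mu j)
     = (\<Sum>j<M. \<Sum>k<M. (if k = j then mu k * d k * (v k - beta k * rho k * thI * v k) else 0)
                 - mu k * beta k * d j * v j)"
    unfolding weighted_slack_grad_def
    by (auto simp: sum_distrib_left algebra_simps intro!: sum.cong)
  also have "\<dots> = (\<Sum>k<M. \<Sum>j<M. (if k = j then mu k * d k * (v k - beta k * rho k * thI * v k) else 0)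
                 - mu k * beta k * d j * v j)"
    by (rule sum.swap)
  also have "\<dots> = (\<Sum>k<M. mu k * (d k * v k - beta k * ((\<Sum>j<M. d j * v j) + rho k * d k * thI * v k)))"
    by (simp add: sum_subtractf sum_distrib_left algebra_simps)
  finally show ?thesis .
qed

lemma weighted_slack_diff:
  "(\<Sum>m<M. mu m * (c' m * v m - beta m * phi M v lBtB thI rho c' m))
   - (\<Sum>m<M. mu m * (c m * v m - beta m * phi M v lBtB thI rho c m))
   = (\<Sum>j<M. (c' j - c j) * weighted_slack_grad M v thI rho beta mu j)"
proof -
  have "mu m * (c' m * v m - beta m * phi M v lBtB thI rho c' m)
        - mu m * (c m * v m - beta m * phi M v lBtB thI rho c m)
      = mu m * ((c' m - c m) * v m
          - beta m * (phi M v lBtB thI rho c' m - phi M v lBtB thI rho c m))" for m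
    by (simp add: algebra_simps)
  then show ?thesis
    by (simp add: phi_diff sum_weighted_slack_grad flip: sum_subtractf)
qed

lemma cfeasible_complementary_slackness_nonpos:
  assumes "cfeasible M lam xbar c" "cfeasible M lam xbar c'"
    and "\<forall>m<M. a m \<ge> 0 \<and> g m \<ge> 0"
    and "\<forall>m<M. a m * c m = 0" "\<forall>m<M. g m * (lam m - c m) = 0"
  shows "(\<Sum>j<M. (c' j - c j) * (g j - a j - nu)) \<le> 0"
proof -
  have "(\<Sum>j<M. c' j - c j) = 0"
    using assms(1,2) by (simp add: cfeasible_def sum_subtractf)
  then have "(\<Sum>j<M. (c' j - c j) * (g j - a j - nu)) = (\<Sum>j<M. (c' j - c j) * (g j - a j))"
    by (simp add: right_diff_distrib sum_subtractf flip: sum_distrib_right)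
  also have "\<dots> \<le> 0"
  proof (rule sum_nonpos)
    fix j assume "j \<in> {..<M}"
    then have j: "j < M" by simp
    have "(c' j - c j) * g j \<le> 0"
    proof (cases "g j = 0")
      case False
      with assms(5) j have "c j = lam j" by auto
      with assms(2,3) j show ?thesis
        unfolding cfeasible_def by (simp add: mult_nonpos_nonneg)
    qed simp
    moreover have "(c' j - c j) * a j \<ge> 0"
    proof (cases "a j = 0")
      case False
      with assms(4) j have "c j = 0" by auto
      with assms(2,3) j show ?thesis unfolding cfeasible_def by simp
    qed simp
    ultimately show "(c' j - c j) * (g j - a j) \<le> 0" by (simp add: right_diff_distrib)
  qed
  finally show ?thesis .
qed

lemma stationary_weighted_slack_maximal:
  assumes feas: "cfeasible M lam xbar c" and feas': "cfeasible M lam xbar c'"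
    and nonneg: "\<forall>m<M. a m \<ge> 0 \<and> g m \<ge> 0"
    and stat: "\<forall>j<M. weighted_slack_grad M v thI rho beta mu j + nu + a j - g j = 0"
    and lower: "\<forall>m<M. a m * c m = 0" and upper: "\<forall>m<M. g m * (lam m - c m) = 0"
  shows "(\<Sum>m<M. mu m * (c' m * v m - beta m * phi M v lBtB thI rho c' m))
         \<le> (\<Sum>m<M. mu m * (c m * v m - beta m * phi M v lBtB thI rho c m))"
proof -
  have "(\<Sum>m<M. mu m * (c' m * v m - beta m * phi M v lBtB thI rho c' m))
        - (\<Sum>m<M. mu m * (c m * v m - beta m * phi M v lBtB thI rho c m))
      = (\<Sum>j<M. (c' j - c j) * (g j - a j - nu))"
    unfolding weighted_slack_diff
  proof (intro sum.cong refl)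
    fix j assume "j \<in> {..<M}"
    then have "weighted_slack_grad M v thI rho beta mu j = g j - a j - nu"
      using stat by (simp add: algebra_simps)
    then show "(c' j - c j) * weighted_slack_grad M v thI rho beta mu j
        = (c' j - c j) * (g j - a j - nu)" by simp
  qed
  also have "\<dots> \<le> 0"
    using cfeasible_complementary_slackness_nonpos[OF feas feas'] nonneg lower upper by blast
  finally show ?thesis by simp
qed

theorem proposition4:
  fixes M :: nat and v lam rho c beta :: "nat \<Rightarrow> real"
    and xbar lBtB thI :: real
  assumes v_pos: "\<forall>m<M. v m > 0"
    and lam_pos: "\<forall>m<M. lam m > 0"
    and xbar: "0 \<le> xbar" "xbar \<le> (\<Sum>m<M. lam m)"
    and lBtB: "lBtB > 0"
    and thI: "thI > 0"
    and rho: "\<forall>m<M. 0 \<le> rho m \<and> rho m \<le> 1"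
    and kkt: "KKT M v lam xbar lBtB thI rho c beta"
  shows "\<exists>u :: nat \<Rightarrow> real.
           (\<forall>m<M. u m = 1 / phi M v lBtB thI rho c m) \<and>
           (\<forall>m<M. c m * v m - beta m * phi M v lBtB thI rho c m = 0) \<and>
           cfeasible M lam xbar c \<and>
           (\<forall>c'. cfeasible M lam xbar c' \<longrightarrow>
              (\<Sum>m<M. u m * (c' m * v m - beta m * phi M v lBtB thI rho c' m))
              \<le> (\<Sum>m<M. u m * (c m * v m - beta m * phi M v lBtB thI rho c m)))"
proof -
  let ?phi = "phi M v lBtB thI rho"
  obtain mu nu a g where feas: "cfeasible M lam xbar c" and
    nonneg: "\<forall>m<M. mu m \<ge> 0 \<and> a m \<ge> 0 \<and> g m \<ge> 0" and
    stat_beta: "\<forall>m<M. 1 - mu m * ?phi c m = 0" and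
    stat_c: "\<forall>j<M. weighted_slack_grad M v thI rho beta mu j + nu + a j - g j = 0" and
    slack: "\<forall>m<M. mu m * (c m * v m - beta m * ?phi c m) = 0" and
    lower: "\<forall>m<M. a m * c m = 0" and upper: "\<forall>m<M. g m * (lam m - c m) = 0"
    using kkt unfolding KKT_def weighted_slack_grad_def by blast
  have "mu m = 1 / ?phi c m \<and> c m * v m - beta m * ?phi c m = 0" if "m < M" for m
  proof -
    have "mu m * ?phi c m = 1" using stat_beta that by auto
    then show ?thesis using slack that by (auto simp: eq_divide_eq)
  qed
  moreover note stationary_weighted_slack_maximal[OF feas _ _ stat_c lower upper] nonneg
  ultimately show ?thesis using feas by blast
qed

end
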